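(* Let $n\ge1$, $r\ge1$, let $R,D\subseteq\{1,\dots,n-1\}$ and $\sigma\in S_n$. Then $$(q_r;q_r)_n\sum_{\substack{Z\in(\mathbb{N}^r)^n\\ \sigma_R(Z)=\sigma}} q^Z\,\chi\!\left(\mathrm{Des}_{R,Z^{(2)}}(\sigma)=D\right)=q_r^{c(D)}\sum_{\substack{S\in(\mathbb{N}^{r-1})^n\\ \mathrm{Des}_{R,S}(\sigma)=D}} q^S,$$ where $c(D)=\sum_{i\in D}(n-i)$.
   Context: $\mathbb{N}=\{0,1,\dots\}$; sequences in $\mathbb{N}^r$ are compared lexicographically (first differing coordinate decides). $(q;t)_r=(1-q)(1-qt)\cdots(1-qt^{r-1})$; $\chi(A)$ is $1$ if $A$ holds and $0$ otherwise. For $R\subseteq\{1,\dots,n-1\}$ and distinct $a,b\in\{1,\dots,n\}$, write $a\sim_R b$ if all of $\min(a,b),\dots,\max(a,b)-1$ lie in $R$. For $S=(s^1,\dots,s^n)\in(\mathbb{N}^r)^n$, the reading order on indices: $i$ is read before $j$ if $s^i<s^j$, or if $s^i=s^j$ and either ($i<j$ and not $i\sim_R j$) or ($i>j$ and $i\sim_R j$); $\sigma_R(S)\in S_n$ is the permutation $\sigma_1\cdots\sigma_n$ listing the indices in this reading order. For $Z=(z^1,\dots,z^n)\in(\mathbb{N}^r)^n$ with $z^j=(z^j_1,\dots,z^j_r)$, $q^Z=\prod_{i=1}^r q_{r-i+1}^{z^1_i+\cdots+z^n_i}$, and $Z^{(2)}\in(\mathbb{N}^{r-1})^n$ is obtained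 by deleting the first coordinate of every $z^j$. For $S=(s^1,\dots,s^n)\in(\mathbb{N}^{r'})^n$ (if $r'=0$, all $s^i$ are empty and equal) and $\sigma\in S_n$, $\mathrm{Des}_{R,S}(\sigma)$ is the set of $i\in\{1,\dots,n-1\}$ with either $s^{\sigma_i}>s^{\sigma_{i+1}}$, or $s^{\sigma_i}=s^{\sigma_{i+1}}$ and either ($\sigma_{i+1}<\sigma_i$ and not $\sigma_{i+1}\sim_R\sigma_i$) or ($\sigma_{i+1}>\sigma_i$ and $\sigma_i\sim_R\sigma_{i+1}$). *)

theory Defs
  imports "HOL-Analysis.Analysis" "HOL-Combinatorics.Permutations"
begin

text \<open>Elements of N^r are lists of length r; an n-tuple (s^1,...,s^n) is a
  function S :: nat => nat list, used on the indices 1..n.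
  The variables q_1,...,q_r are q 1, ..., q r.\<close>

definition lex_less :: "nat list \<Rightarrow> nat list \<Rightarrow> bool" where
  "lex_less a b \<longleftrightarrow> (\<exists>k < min (length a) (length b).
      take k a = take k b \<and> a ! k < b ! k)"

definition simR :: "nat set \<Rightarrow> nat \<Rightarrow> nat \<Rightarrow> bool" where
  "simR R a b \<longleftrightarrow> a \<noteq> b \<and> {min a b..<max a b} \<subseteq> R"

definition read_before :: "nat set \<Rightarrow> (nat \<Rightarrow> nat list) \<Rightarrow> nat \<Rightarrow> nat \<Rightarrow> bool" where
  "read_before R S i j \<longleftrightarrow> lex_less (S i) (S j) \<or>
     (S i = S j \<and> ((i < j \<and> \<not> simR R i j) \<or> (i > j \<and> simR R i j)))"

definition sigmaR :: "nat \<Rightarrow> nat set \<Rightarrow> (nat \<Rightarrow> nat list) \<Rightarrow> (nat \<Rightarrow> nat)" where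
  "sigmaR n R S = (THE \<sigma>. \<sigma> permutes {1..n} \<and>
      (\<forall>a b. 1 \<le> a \<and> a < b \<and> b \<le> n \<longrightarrow> read_before R S (\<sigma> a) (\<sigma> b)))"

definition DesRS :: "nat \<Rightarrow> nat set \<Rightarrow> (nat \<Rightarrow> nat list) \<Rightarrow> (nat \<Rightarrow> nat) \<Rightarrow> nat set" where
  "DesRS n R S \<sigma> = {i \<in> {1..n-1}.
      lex_less (S (\<sigma> (i+1))) (S (\<sigma> i)) \<or>
      (S (\<sigma> i) = S (\<sigma> (i+1)) \<and>
        ((\<sigma> (i+1) < \<sigma> i \<and> \<not> simR R (\<sigma> (i+1)) (\<sigma> i)) \<or>
         (\<sigma> (i+1) > \<sigma> i \<and> simR R (\<sigma> i) (\<sigma> (i+1)))))}"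

definition tuples :: "nat \<Rightarrow> nat \<Rightarrow> (nat \<Rightarrow> nat list) set" where
  "tuples n r = {Z. (\<forall>j\<in>{1..n}. length (Z j) = r) \<and> (\<forall>j. j \<notin> {1..n} \<longrightarrow> Z j = [])}"

definition qmon :: "nat \<Rightarrow> nat \<Rightarrow> (nat \<Rightarrow> real) \<Rightarrow> (nat \<Rightarrow> nat list) \<Rightarrow> real" where
  "qmon n r q Z = (\<Prod>i\<in>{1..r}. q (r - i + 1) ^ (\<Sum>j\<in>{1..n}. Z j ! (i - 1)))"

text \<open>Z^(2): delete the first coordinate of every z^j\<close>
definition drop_first :: "(nat \<Rightarrow> nat list) \<Rightarrow> (nat \<Rightarrow> nat list)" where
  "drop_first Z = (\<lambda>j. tl (Z j))"

definition qpoch :: "real \<Rightarrow> real \<Rightarrow> nat \<Rightarrow> real" where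
  "qpoch a t m = (\<Prod>k<m. (1 - a * t ^ k))"

definition cD :: "nat \<Rightarrow> nat set \<Rightarrow> nat" where
  "cD n D = (\<Sum>i\<in>D. n - i)"

end

theory Submission
  imports Defs
begin

text \<open>Split Z into the vector f of first coordinates and S = Z^(2). Reading Z compares first
  coordinates and breaks ties by the reading order of S, so sigma_R(Z) = sigma exactly when f is
  weakly increasing along sigma, strictly at the descents Des_{R,S}(sigma). The left-hand sum
  therefore factors into the right-hand sum over S times the generating function of such f with
  prescribed strict ascents D. Passing to the increments e_k = f(sigma(k+1)) - f(sigma k) - [k in D]
  turns q_r^(sum f) into q_r^(c(D)) times a product of geometric weights (q_r^(n-k))^(e_k), whose
  sum over all e is q_r^(c(D)) / (q_r;q_r)_n.\<close>

lemma lex_less_iff_lexord: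
  "length a = length b \<Longrightarrow> lex_less a b \<longleftrightarrow> (a, b) \<in> lexord less_than"
  unfolding lex_less_def lexord_take_index_conv by auto

lemma lex_less_irrefl: "\<not> lex_less a a"
  unfolding lex_less_def by auto

lemma lex_less_trans:
  "length a = length b \<Longrightarrow> length b = length c \<Longrightarrow> lex_less a b \<Longrightarrow> lex_less b c \<Longrightarrow> lex_less a c"
  by (metis lex_less_iff_lexord lexord_trans trans_less_than)

lemma lex_less_total:
  "length a = length b \<Longrightarrow> a \<noteq> b \<Longrightarrow> lex_less a b \<or> lex_less b a"
  using total_lexord[OF total_less_than] unfolding total_on_def by (simp add: lex_less_iff_lexord)

lemma lex_less_Cons:
  "length x = length y \<Longrightarrow> lex_less (a # x) (b # y) \<longleftrightarrow> a < b \<or> (a = b \<and> lex_less x y)"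
  by (simp add: lex_less_iff_lexord)

lemma simR_commute: "simR R a b = simR R b a"
  unfolding simR_def by (auto simp: min_def max_def)

lemma simR_split: "a < b \<Longrightarrow> b < c \<Longrightarrow> simR R a c \<longleftrightarrow> simR R a b \<and> simR R b c"
proof -
  assume "a < b" "b < c"
  then have "{a..<c} = {a..<b} \<union> {b..<c}" by auto
  with \<open>a < b\<close> \<open>b < c\<close> show ?thesis unfolding simR_def by auto
qed

definition tiebreak :: "nat set \<Rightarrow> nat \<Rightarrow> nat \<Rightarrow> bool" where
  "tiebreak R i j \<longleftrightarrow> (i < j \<and> \<not> simR R i j) \<or> (j < i \<and> simR R i j)"

lemma tiebreak_irrefl: "\<not> tiebreak R i i"
  unfolding tiebreak_def by auto

lemma tiebreak_total: "i \<noteq> j \<Longrightarrow> tiebreak R i j \<or> tiebreak R j i"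
  unfolding tiebreak_def by (metis simR_commute linorder_neqE_nat)

text \<open>The classes of \<open>\<sim>\<^sub>R\<close> are intervals; \<open>tiebreak R\<close> orders different classes
  increasingly and each class decreasingly, hence it is a strict total order.\<close>

lemma tiebreak_trans:
  assumes ij: "tiebreak R i j" and jk: "tiebreak R j k"
  shows "tiebreak R i k"
proof -
  note split = simR_split[where R = R] and comm = simR_commute[where R = R]
  consider "i < j" "j < k" | "i < k" "k < j" | "j < i" "i < k" | "j < k" "k < i"
    | "k < i" "i < j" | "k < j" "j < i" | "i = k" | "i = j" | "j = k"
    by linarith
  then show ?thesis
  proof cases
    case 1 with ij jk split[of i j k] show ?thesis unfolding tiebreak_def by auto
  next
    case 2 with ij jk split[of i k j] comm[of j k] show ?thesis unfolding tiebreak_def by auto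
  next
    case 3 with ij jk split[of j i k] comm[of j i] show ?thesis unfolding tiebreak_def by auto
  next
    case 4 with ij jk split[of j k i] comm[of i k] comm[of i j] show ?thesis unfolding tiebreak_def by auto
  next
    case 5 with ij jk split[of k i j] comm[of i k] comm[of j k] show ?thesis unfolding tiebreak_def by auto
  next
    case 6 with ij jk split[of k j i] comm[of i k] comm[of j k] comm[of i j] show ?thesis
      unfolding tiebreak_def by auto
  qed (use ij jk tiebreak_irrefl comm in \<open>auto simp: tiebreak_def\<close>)
qed

lemma read_before_iff:
  "read_before R S i j \<longleftrightarrow> lex_less (S i) (S j) \<or> (S i = S j \<and> tiebreak R i j)"
  unfolding read_before_def tiebreak_def by auto

lemma read_before_irrefl: "\<not> read_before R S i i"
  by (simp add: read_before_iff lex_less_irrefl tiebreak_irrefl)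

context
  fixes N :: "nat set" and S :: "nat \<Rightarrow> nat list" and m :: nat
  assumes lengths: "\<And>j. j \<in> N \<Longrightarrow> length (S j) = m"
begin

lemma transp_on_read_before: "transp_on N (read_before R S)"
proof (rule transp_onI)
  fix i j k assume "i \<in> N" "j \<in> N" "k \<in> N" and ij: "read_before R S i j" and jk: "read_before R S j k"
  then have "length (S i) = length (S j)" "length (S j) = length (S k)"
    using lengths by simp_all
  with ij jk show "read_before R S i k"
    using lex_less_trans[of "S i" "S j" "S k"] tiebreak_trans[of R i j k]
    unfolding read_before_iff by auto
qed

lemma totalp_on_read_before: "totalp_on N (read_before R S)"
proof (rule totalp_onI)
  fix i j assume "i \<in> N" "j \<in> N" "i \<noteq> j"
  then show "read_before R S i j \<or> read_before R S j i"
    using lengths lex_less_total[of "S i" "S j"] tiebreak_total[of i j R]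
    unfolding read_before_iff by (cases "S i = S j") auto
qed

lemma asymp_on_read_before: "asymp_on N (read_before R S)"
  using transp_on_read_before read_before_irrefl
  by (simp add: asymp_on_iff_irreflp_on_if_transp_on irreflp_onI)

end

definition sorted_by :: "('a \<Rightarrow> 'a \<Rightarrow> bool) \<Rightarrow> nat \<Rightarrow> (nat \<Rightarrow> 'a) \<Rightarrow> bool" where
  "sorted_by P n \<tau> \<longleftrightarrow> (\<forall>a b. 1 \<le> a \<and> a < b \<and> b \<le> n \<longrightarrow> P (\<tau> a) (\<tau> b))"

definition rank_in :: "'a set \<Rightarrow> ('a \<Rightarrow> 'a \<Rightarrow> bool) \<Rightarrow> 'a \<Rightarrow> nat" where
  "rank_in N P x = card {y \<in> N. P y x}"

lemma rank_in_strict_mono: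
  assumes "finite N" "transp_on N P" "asymp_on N P" "x \<in> N" "y \<in> N" "P x y"
  shows "rank_in N P x < rank_in N P y"
proof -
  have "{z \<in> N. P z x} \<subset> {z \<in> N. P z y}"
    using assms(2-) by (auto dest: transp_onD asymp_onD)
  then show ?thesis
    unfolding rank_in_def using assms(1) by (simp add: psubset_card_mono)
qed

lemma inj_on_rank_in:
  assumes "finite N" "transp_on N P" "asymp_on N P" "totalp_on N P"
  shows "inj_on (rank_in N P) N"
proof (rule inj_onI, rule ccontr)
  fix x y assume "x \<in> N" "y \<in> N" "rank_in N P x = rank_in N P y" "x \<noteq> y"
  then show False
    using totalp_onD[OF assms(4)] rank_in_strict_mono[OF assms(1-3)] by (metis less_irrefl)
qed

lemma rank_in_sorted_by:
  assumes "asymp_on {1..n} P" "\<tau> permutes {1..n}" "sorted_by P n \<tau>" "a \<in> {1..n}"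
  shows "rank_in {1..n} P (\<tau> a) = a - 1"
proof -
  have \<tau>_in: "\<And>x. x \<in> {1..n} \<Longrightarrow> \<tau> x \<in> {1..n}"
    using permutes_in_image[OF assms(2)] by blast
  have "{y \<in> {1..n}. P y (\<tau> a)} = \<tau> ` {1..<a}"
  proof (intro equalityI subsetI)
    fix y assume y: "y \<in> {y \<in> {1..n}. P y (\<tau> a)}"
    define b where "b = inv \<tau> y"
    have b: "b \<in> {1..n}" "y = \<tau> b"
      using y permutes_in_image[OF permutes_inv[OF assms(2)]] permutes_inverses(1)[OF assms(2)]
      by (auto simp: b_def)
    have "\<not> a \<le> b"
    proof
      assume "a \<le> b"
      then have "P (\<tau> a) (\<tau> b) \<or> a = b"
        using assms(3,4) b unfolding sorted_by_def by (auto simp: le_less)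
      moreover have "\<tau> a \<in> {1..n}" "\<tau> b \<in> {1..n}" "P (\<tau> b) (\<tau> a)"
        using y b \<tau>_in assms(4) by auto
      ultimately show False
        using asymp_onD[OF assms(1)] by metis
    qed
    with b show "y \<in> \<tau> ` {1..<a}" by auto
  next
    fix y assume "y \<in> \<tau> ` {1..<a}"
    then show "y \<in> {y \<in> {1..n}. P y (\<tau> a)}"
      using assms(3,4) \<tau>_in unfolding sorted_by_def by force
  qed
  moreover have "inj_on \<tau> {1..<a}"
    using assms(2) by (meson permutes_inj inj_on_subset subset_UNIV)
  ultimately show ?thesis
    unfolding rank_in_def by (simp add: card_image)
qed

lemma rank_in_less_card:
  assumes "finite N" "asymp_on N P" "x \<in> N"
  shows "rank_in N P x < card N"
proof -
  have "{y \<in> N. P y x} \<subseteq> N - {x}"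
    using assms(2) by (auto dest: asymp_onD)
  then have "rank_in N P x \<le> card (N - {x})"
    unfolding rank_in_def using assms(1) by (simp add: card_mono)
  also have "\<dots> < card N"
    using assms(1,3) by (rule card_Diff1_less)
  finally show ?thesis .
qed

lemma sorted_by_iff_adjacent:
  assumes "transp_on {1..n} P" "\<tau> permutes {1..n}"
  shows "sorted_by P n \<tau> \<longleftrightarrow> (\<forall>a. 1 \<le> a \<and> a < n \<longrightarrow> P (\<tau> a) (\<tau> (Suc a)))"
proof
  assume adjacent: "\<forall>a. 1 \<le> a \<and> a < n \<longrightarrow> P (\<tau> a) (\<tau> (Suc a))"
  have \<tau>_in: "\<And>x. x \<in> {1..n} \<Longrightarrow> \<tau> x \<in> {1..n}"
    using permutes_in_image[OF assms(2)] by blast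
  have "P (\<tau> a) (\<tau> b)" if "1 \<le> a" "a < b" "b \<le> n" for a b
    using that
  proof (induction b)
    case (Suc b)
    show ?case
    proof (cases "a = b")
      case False
      then have "P (\<tau> a) (\<tau> b)" "P (\<tau> b) (\<tau> (Suc b))"
        using Suc adjacent by auto
      moreover have "\<tau> a \<in> {1..n}" "\<tau> b \<in> {1..n}" "\<tau> (Suc b) \<in> {1..n}"
        using Suc False \<tau>_in by auto
      ultimately show ?thesis
        using transp_onD[OF assms(1)] by blast
    qed (use Suc adjacent in auto)
  qed simp
  then show "sorted_by P n \<tau>"
    unfolding sorted_by_def by blast
qed (simp add: sorted_by_def)

context
  fixes n :: nat and P :: "nat \<Rightarrow> nat \<Rightarrow> bool"
  assumes trans: "transp_on {1..n} P" and asym: "asymp_on {1..n} P" and total: "totalp_on {1..n} P"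
begin

lemma sorted_by_unique:
  assumes "\<sigma> permutes {1..n}" "sorted_by P n \<sigma>" "\<tau> permutes {1..n}" "sorted_by P n \<tau>"
  shows "\<sigma> = \<tau>"
proof
  fix a show "\<sigma> a = \<tau> a"
  proof (cases "a \<in> {1..n}")
    case True
    then have "rank_in {1..n} P (\<sigma> a) = rank_in {1..n} P (\<tau> a)"
      using rank_in_sorted_by[OF asym] assms by simp
    moreover have "\<sigma> a \<in> {1..n}" "\<tau> a \<in> {1..n}"
      using True permutes_in_image[OF assms(1)] permutes_in_image[OF assms(3)] by blast+
    ultimately show ?thesis
      using inj_on_rank_in[OF _ trans asym total] by (simp add: inj_on_eq_iff)
  next
    case False
    then show ?thesis using assms(1,3) by (simp add: permutes_not_in)
  qed
qed

lemma sorted_by_exists: "\<exists>\<sigma>. \<sigma> permutes {1..n} \<and> sorted_by P n \<sigma>"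
proof -
  let ?N = "{1..n}" and ?rk = "rank_in {1..n} P"
  have "?rk ` ?N = {0..<n}"
  proof (rule card_subset_eq)
    show "?rk ` ?N \<subseteq> {0..<n}"
      using rank_in_less_card[OF _ asym] by auto
    show "card (?rk ` ?N) = card {0..<n}"
      using inj_on_rank_in[OF _ trans asym total] by (simp add: card_image)
  qed simp
  then have rk: "bij_betw ?rk ?N {0..<n}"
    using inj_on_rank_in[OF _ trans asym total] by (simp add: bij_betw_def)
  define \<sigma> where "\<sigma> a = (if a \<in> ?N then inv_into ?N ?rk (a - 1) else a)" for a
  have "bij_betw (\<lambda>a. a - 1) ?N {0..<n}"
    by (rule bij_betwI[where g = Suc]) auto
  then have "bij_betw (inv_into ?N ?rk \<circ> (\<lambda>a. a - 1)) ?N ?N"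
    using bij_betw_trans bij_betw_inv_into[OF rk] by blast
  moreover have "bij_betw \<sigma> ?N ?N \<longleftrightarrow> bij_betw (inv_into ?N ?rk \<circ> (\<lambda>a. a - 1)) ?N ?N"
    by (rule bij_betw_cong) (simp add: \<sigma>_def)
  ultimately have "bij_betw \<sigma> ?N ?N"
    by simp
  then have perm: "\<sigma> permutes ?N"
    by (rule bij_imp_permutes) (auto simp: \<sigma>_def)
  have rank_\<sigma>: "?rk (\<sigma> a) = a - 1" if "a \<in> ?N" for a
    using that rk by (auto simp: \<sigma>_def bij_betw_inv_into_right)
  have "sorted_by P n \<sigma>"
    unfolding sorted_by_def
  proof (intro allI impI)
    fix a b assume ab: "1 \<le> a \<and> a < b \<and> b \<le> n"
    then have "a \<in> ?N" "b \<in> ?N"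
      by auto
    then have "\<sigma> a \<in> ?N" "\<sigma> b \<in> ?N" "?rk (\<sigma> a) < ?rk (\<sigma> b)"
      using permutes_in_image[OF perm] rank_\<sigma> ab by auto
    then show "P (\<sigma> a) (\<sigma> b)"
      using totalp_onD[OF total] rank_in_strict_mono[OF finite_atLeastAtMost trans asym]
      by (metis less_asym less_irrefl)
  qed
  with perm show ?thesis by blast
qed

lemma The_sorted_by_eq_iff:
  assumes "\<tau> permutes {1..n}"
  shows "(THE \<sigma>. \<sigma> permutes {1..n} \<and> sorted_by P n \<sigma>) = \<tau> \<longleftrightarrow> sorted_by P n \<tau>"
proof -
  obtain \<sigma> where \<sigma>: "\<sigma> permutes {1..n}" "sorted_by P n \<sigma>"
    using sorted_by_exists by blast
  then have "(THE \<sigma>. \<sigma> permutes {1..n} \<and> sorted_by P n \<sigma>) = \<sigma>"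
    using sorted_by_unique by (intro the_equality) auto
  then show ?thesis
    using \<sigma> assms sorted_by_unique by auto
qed

end

lemma sigmaR_eq_iff:
  assumes "\<And>j. j \<in> {1..n} \<Longrightarrow> length (S j) = m" "\<tau> permutes {1..n}"
  shows "sigmaR n R S = \<tau> \<longleftrightarrow> (\<forall>a. 1 \<le> a \<and> a < n \<longrightarrow> read_before R S (\<tau> a) (\<tau> (Suc a)))"
proof -
  have trans: "transp_on {1..n} (read_before R S)"
    using assms(1) by (rule transp_on_read_before)
  have asym: "asymp_on {1..n} (read_before R S)"
    using assms(1) by (rule asymp_on_read_before)
  have total: "totalp_on {1..n} (read_before R S)"
    using assms(1) by (rule totalp_on_read_before)
  have "sigmaR n R S = (THE \<sigma>. \<sigma> permutes {1..n} \<and> sorted_by (read_before R S) n \<sigma>)"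
    unfolding sigmaR_def sorted_by_def ..
  then show ?thesis
    using The_sorted_by_eq_iff[OF trans asym total assms(2)] sorted_by_iff_adjacent[OF trans assms(2)]
    by simp
qed

lemma DesRS_iff:
  "i \<in> {1..n-1} \<Longrightarrow> i \<in> DesRS n R S \<sigma> \<longleftrightarrow> read_before R S (\<sigma> (Suc i)) (\<sigma> i)"
  using simR_commute[of R "\<sigma> i" "\<sigma> (Suc i)"] unfolding DesRS_def read_before_def by auto

lemma DesRS_iff_not_read_before:
  assumes lengths: "\<And>j. j \<in> {1..n} \<Longrightarrow> length (S j) = m" and \<sigma>: "\<sigma> permutes {1..n}"
    and a: "1 \<le> a" "a < n"
  shows "a \<in> DesRS n R S \<sigma> \<longleftrightarrow> \<not> read_before R S (\<sigma> a) (\<sigma> (Suc a))"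
proof -
  have x: "\<sigma> a \<in> {1..n}" and y: "\<sigma> (Suc a) \<in> {1..n}"
    using a permutes_in_image[OF \<sigma>] by auto
  have "\<sigma> a \<noteq> \<sigma> (Suc a)"
    by (simp add: inj_eq[OF permutes_inj[OF \<sigma>]])
  then have "read_before R S (\<sigma> a) (\<sigma> (Suc a)) \<or> read_before R S (\<sigma> (Suc a)) (\<sigma> a)"
    using totalp_onD[OF totalp_on_read_before[OF lengths] x y] by simp
  moreover have "read_before R S (\<sigma> a) (\<sigma> (Suc a)) \<Longrightarrow> \<not> read_before R S (\<sigma> (Suc a)) (\<sigma> a)"
    using asymp_onD[OF asymp_on_read_before[OF lengths] x y] .
  moreover have "a \<in> DesRS n R S \<sigma> \<longleftrightarrow> read_before R S (\<sigma> (Suc a)) (\<sigma> a)"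
    using a by (intro DesRS_iff) auto
  ultimately show ?thesis
    by blast
qed

definition nat_vectors :: "nat \<Rightarrow> (nat \<Rightarrow> nat) set" where
  "nat_vectors n = {f. \<forall>j. j \<notin> {1..n} \<longrightarrow> f j = 0}"

definition sigma_compatible :: "nat \<Rightarrow> (nat \<Rightarrow> nat) \<Rightarrow> nat set \<Rightarrow> (nat \<Rightarrow> nat) set" where
  "sigma_compatible n \<sigma> D = {f \<in> nat_vectors n.
     \<forall>a. 1 \<le> a \<and> a < n \<longrightarrow> f (\<sigma> a) + (if a \<in> D then 1 else 0) \<le> f (\<sigma> (Suc a))}"

definition cons_tuple :: "nat \<Rightarrow> (nat \<Rightarrow> nat) \<Rightarrow> (nat \<Rightarrow> nat list) \<Rightarrow> nat \<Rightarrow> nat list" where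
  "cons_tuple n f S j = (if j \<in> {1..n} then f j # S j else [])"

lemma read_before_cons_tuple:
  assumes "x \<in> {1..n}" "y \<in> {1..n}" "length (S x) = length (S y)"
  shows "read_before R (cons_tuple n f S) x y \<longleftrightarrow> f x < f y \<or> (f x = f y \<and> read_before R S x y)"
  using assms by (auto simp: read_before_iff cons_tuple_def lex_less_Cons)

lemma sigmaR_cons_tuple_eq_iff:
  assumes S: "S \<in> tuples n m" and \<sigma>: "\<sigma> permutes {1..n}" and f: "f \<in> nat_vectors n"
  shows "sigmaR n R (cons_tuple n f S) = \<sigma> \<longleftrightarrow> f \<in> sigma_compatible n \<sigma> (DesRS n R S \<sigma>)"
proof -
  have lengths: "\<And>j. j \<in> {1..n} \<Longrightarrow> length (S j) = m"
    using S by (simp add: tuples_def)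
  have "\<And>j. j \<in> {1..n} \<Longrightarrow> length (cons_tuple n f S j) = Suc m"
    using lengths by (simp add: cons_tuple_def)
  then have "sigmaR n R (cons_tuple n f S) = \<sigma> \<longleftrightarrow>
      (\<forall>a. 1 \<le> a \<and> a < n \<longrightarrow> read_before R (cons_tuple n f S) (\<sigma> a) (\<sigma> (Suc a)))"
    by (rule sigmaR_eq_iff[OF _ \<sigma>])
  also have "\<dots> \<longleftrightarrow> (\<forall>a. 1 \<le> a \<and> a < n \<longrightarrow>
      f (\<sigma> a) + (if a \<in> DesRS n R S \<sigma> then 1 else 0) \<le> f (\<sigma> (Suc a)))"
  proof (intro all_cong imp_cong refl)
    fix a assume a: "1 \<le> a \<and> a < n"
    then have x: "\<sigma> a \<in> {1..n}" and y: "\<sigma> (Suc a) \<in> {1..n}"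
      using permutes_in_image[OF \<sigma>] by auto
    show "read_before R (cons_tuple n f S) (\<sigma> a) (\<sigma> (Suc a)) \<longleftrightarrow>
        f (\<sigma> a) + (if a \<in> DesRS n R S \<sigma> then 1 else 0) \<le> f (\<sigma> (Suc a))"
      using read_before_cons_tuple[OF x y] lengths[OF x] lengths[OF y]
        DesRS_iff_not_read_before[OF lengths \<sigma>] a
      by auto
  qed
  finally show ?thesis
    using f by (simp add: sigma_compatible_def)
qed

lemma has_sum_mult_nonneg:
  fixes f :: "'a \<Rightarrow> real" and g :: "'b \<Rightarrow> real"
  assumes f: "(f has_sum a) A" and g: "(g has_sum b) B"
    and "\<And>x. x \<in> A \<Longrightarrow> 0 \<le> f x" "\<And>y. y \<in> B \<Longrightarrow> 0 \<le> g y"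
  shows "((\<lambda>(x, y). f x * g y) has_sum a * b) (A \<times> B)"
proof -
  have rows: "((\<lambda>y. (\<lambda>(x, y). f x * g y) (x, y)) has_sum f x * b) B" for x
    using has_sum_cmult_right[OF g] by simp
  have total: "((\<lambda>x. f x * b) has_sum a * b) A"
    using has_sum_cmult_left[OF f] .
  have "(\<lambda>(x, y). f x * g y) summable_on A \<times> B"
    using assms(3,4) by (intro summable_on_SigmaI[OF rows has_sum_imp_summable[OF total]]) auto
  then show ?thesis
    using has_sum_SigmaI[OF rows total] by simp
qed

lemma has_sum_geometric_Pi:
  fixes x :: "'i \<Rightarrow> real"
  assumes "finite J" "\<And>j. j \<in> J \<Longrightarrow> 0 \<le> x j \<and> x j < 1"
  shows "((\<lambda>e. \<Prod>j\<in>J. x j ^ e j) has_sum (\<Prod>j\<in>J. 1 / (1 - x j))) {e. \<forall>j. j \<notin> J \<longrightarrow> e j = 0}"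
  using assms
proof (induction J rule: finite_induct)
  case empty
  have "{e :: 'i \<Rightarrow> nat. \<forall>j. e j = 0} = {\<lambda>_. 0}"
    by auto
  then show ?case
    by (simp add: has_sum_finiteI)
next
  case (insert i J)
  let ?E = "\<lambda>J. {e :: 'i \<Rightarrow> nat. \<forall>j. j \<notin> J \<longrightarrow> e j = 0}"
  have "((\<lambda>k. x i ^ k) has_sum 1 / (1 - x i)) UNIV"
    using insert.prems by (intro sums_nonneg_imp_has_sum geometric_sums) auto
  then have "((\<lambda>(e, k). (\<Prod>j\<in>J. x j ^ e j) * x i ^ k) has_sum
      (\<Prod>j\<in>J. 1 / (1 - x j)) * (1 / (1 - x i))) (?E J \<times> UNIV)"
    using insert by (intro has_sum_mult_nonneg) (auto intro: prod_nonneg)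
  moreover have "(\<lambda>p. \<Prod>j\<in>insert i J. x j ^ (case p of (e, k) \<Rightarrow> e(i := k)) j) =
      (\<lambda>(e, k). (\<Prod>j\<in>J. x j ^ e j) * x i ^ k)"
  proof (intro ext, clarify)
    fix e k
    have "(\<Prod>j\<in>J. x j ^ (e(i := k)) j) = (\<Prod>j\<in>J. x j ^ e j)"
      using insert.hyps by (intro prod.cong) auto
    then show "(\<Prod>j\<in>insert i J. x j ^ (e(i := k)) j) = (\<Prod>j\<in>J. x j ^ e j) * x i ^ k"
      using insert.hyps by (simp add: mult.commute)
  qed
  moreover have "bij_betw (\<lambda>(e, k). e(i := k)) (?E J \<times> UNIV) (?E (insert i J))"
    by (rule bij_betw_byWitness[where f' = "\<lambda>e. (e(i := 0), e i)"])
      (use insert.hyps in \<open>auto simp: fun_upd_idem\<close>)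
  ultimately show ?case
    using insert.hyps has_sum_reindex_bij_betw by (fastforce simp: mult.commute)
qed

lemma bij_betw_cons_tuple:
  "bij_betw (\<lambda>(f, S). cons_tuple n f S) (nat_vectors n \<times> tuples n m) (tuples n (Suc m))"
proof (rule bij_betw_byWitness[where f' = "\<lambda>Z. (\<lambda>j. if j \<in> {1..n} then hd (Z j) else 0, drop_first Z)"])
  show "\<forall>Z\<in>tuples n (Suc m). (\<lambda>(f, S). cons_tuple n f S)
      (\<lambda>j. if j \<in> {1..n} then hd (Z j) else 0, drop_first Z) = Z"
  proof
    fix Z assume Z: "Z \<in> tuples n (Suc m)"
    have "cons_tuple n (\<lambda>j. if j \<in> {1..n} then hd (Z j) else 0) (drop_first Z) j = Z j" for j
      using Z unfolding tuples_def by (cases "Z j") (force simp: cons_tuple_def drop_first_def)+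
    then show "(\<lambda>(f, S). cons_tuple n f S) (\<lambda>j. if j \<in> {1..n} then hd (Z j) else 0, drop_first Z) = Z"
      by auto
  qed
qed (auto simp: cons_tuple_def drop_first_def tuples_def nat_vectors_def fun_eq_iff)

lemma drop_first_cons_tuple: "S \<in> tuples n m \<Longrightarrow> drop_first (cons_tuple n f S) = S"
  by (auto simp: drop_first_def cons_tuple_def tuples_def)

lemma qmon_cons_tuple:
  "qmon n (Suc m) q (cons_tuple n f S) = q (Suc m) ^ sum f {1..n} * qmon n m q S"
proof -
  have "qmon n (Suc m) q (cons_tuple n f S) =
      q (Suc m) ^ (\<Sum>j\<in>{1..n}. cons_tuple n f S j ! 0) *
      (\<Prod>i\<in>{Suc 1..Suc m}. q (Suc m - i + 1) ^ (\<Sum>j\<in>{1..n}. cons_tuple n f S j ! (i - 1)))"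
    unfolding qmon_def by (simp add: prod.atLeast_Suc_atMost)
  also have "(\<Sum>j\<in>{1..n}. cons_tuple n f S j ! 0) = sum f {1..n}"
    by (rule sum.cong) (auto simp: cons_tuple_def)
  also have "(\<Prod>i\<in>{Suc 1..Suc m}. q (Suc m - i + 1) ^ (\<Sum>j\<in>{1..n}. cons_tuple n f S j ! (i - 1)))
      = qmon n m q S"
    unfolding qmon_def prod.shift_bounds_cl_Suc_ivl
    by (intro prod.cong refl arg_cong2[where f = power] sum.cong) (auto simp: cons_tuple_def)
  finally show ?thesis .
qed

lemma qmon_nonneg:
  assumes "\<And>i. i \<in> {1..m} \<Longrightarrow> 0 \<le> q i"
  shows "0 \<le> qmon n m q S"
  unfolding qmon_def by (intro prod_nonneg zero_le_power assms) auto

lemma has_sum_power_sum_nat_vectors: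
  fixes c :: real
  assumes "0 \<le> c" "c < 1"
  shows "((\<lambda>f. c ^ sum f {1..n}) has_sum (1 / (1 - c)) ^ n) (nat_vectors n)"
  using has_sum_geometric_Pi[of "{1..n}" "\<lambda>_. c"] assms
  by (simp add: nat_vectors_def power_sum)

lemma qmon_summable:
  "(\<And>i. i \<in> {1..m} \<Longrightarrow> 0 \<le> q i \<and> q i < 1) \<Longrightarrow> qmon n m q summable_on tuples n m"
proof (induction m)
  case 0
  have "tuples n 0 = {\<lambda>_. []}"
    by (force simp: tuples_def fun_eq_iff)
  then show ?case
    by simp
next
  case (Suc m)
  then have "qmon n m q summable_on tuples n m" "0 \<le> q (Suc m)" "q (Suc m) < 1"
    by auto
  then have "((\<lambda>(f, S). q (Suc m) ^ sum f {1..n} * qmon n m q S) has_sum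
      (1 / (1 - q (Suc m))) ^ n * infsum (qmon n m q) (tuples n m)) (nat_vectors n \<times> tuples n m)"
    using Suc.prems
    by (intro has_sum_mult_nonneg has_sum_power_sum_nat_vectors qmon_nonneg)
      (auto intro: has_sum_infsum)
  then have "(qmon n (Suc m) q has_sum (1 / (1 - q (Suc m))) ^ n * infsum (qmon n m q) (tuples n m))
      (tuples n (Suc m))"
    using has_sum_reindex_bij_betw[OF bij_betw_cons_tuple[of n m], of "qmon n (Suc m) q"]
    by (simp add: qmon_cons_tuple case_prod_unfold)
  then show ?case
    by (auto simp: summable_on_def)
qed

lemma sum_atLeastAtMost_partial_sums:
  fixes h :: "nat \<Rightarrow> nat"
  shows "(\<Sum>a\<in>{1..n}. \<Sum>k<a. h k) = (\<Sum>k<n. (n - k) * h k)"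
proof (induction n)
  case (Suc n)
  have "(\<Sum>a\<in>{1..Suc n}. \<Sum>k<a. h k) = (\<Sum>k<n. (n - k) * h k) + (\<Sum>k<Suc n. h k)"
    using Suc by simp
  also have "\<dots> = (\<Sum>k<Suc n. (Suc n - k) * h k)"
    by (simp add: sum.distrib[symmetric] Suc_diff_le algebra_simps)
  finally show ?case .
qed simp

lemma qpoch_eq_prod_reversed: "qpoch c c n = (\<Prod>k<n. 1 - c ^ (n - k))"
proof -
  have "qpoch c c n = (\<Prod>k<n. 1 - c ^ Suc k)"
    by (simp add: qpoch_def)
  also have "\<dots> = (\<Prod>k<n. 1 - c ^ Suc (n - Suc k))"
    by (rule prod.nat_diff_reindex[symmetric])
  also have "\<dots> = (\<Prod>k<n. 1 - c ^ (n - k))"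
    by (intro prod.cong) (simp_all add: Suc_diff_Suc)
  finally show ?thesis .
qed

lemma bij_betw_partial_sums_sigma_compatible_id:
  assumes "D \<subseteq> {1..n-1}"
  shows "bij_betw (\<lambda>e a. if a \<in> {1..n} then \<Sum>k<a. e k + (if k \<in> D then 1 else 0) else 0)
    {e. \<forall>k. k \<notin> {..<n} \<longrightarrow> e k = 0} (sigma_compatible n id D)"
proof -
  define \<delta> where "\<delta> k = (if k \<in> D then 1 else 0 :: nat)" for k
  define \<phi> where "\<phi> e a = (if a \<in> {1..n} then \<Sum>k<a. e k + \<delta> k else 0)" for e a
  define \<psi> where "\<psi> f k = (if k < n then f (Suc k) - f k - \<delta> k else 0)" for f k
  have \<delta>0: "\<delta> 0 = 0"
    using assms by (auto simp: \<delta>_def)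
  have "bij_betw \<phi> {e. \<forall>k. k \<notin> {..<n} \<longrightarrow> e k = 0} (sigma_compatible n id D)"
  proof (rule bij_betw_byWitness[where f' = \<psi>])
    show "\<forall>e\<in>{e. \<forall>k. k \<notin> {..<n} \<longrightarrow> e k = 0}. \<psi> (\<phi> e) = e"
      by (auto simp: \<phi>_def \<psi>_def fun_eq_iff)
    show "\<phi> ` {e. \<forall>k. k \<notin> {..<n} \<longrightarrow> e k = 0} \<subseteq> sigma_compatible n id D"
      by (auto simp: \<phi>_def \<delta>_def sigma_compatible_def nat_vectors_def)
    show "\<psi> ` sigma_compatible n id D \<subseteq> {e. \<forall>k. k \<notin> {..<n} \<longrightarrow> e k = 0}"
      by (auto simp: \<psi>_def)
    show "\<forall>f\<in>sigma_compatible n id D. \<phi> (\<psi> f) = f"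
    proof
      fix f assume f: "f \<in> sigma_compatible n id D"
      have "(\<Sum>k<a. \<psi> f k + \<delta> k) = f a" if "a \<le> n" for a
        using that
      proof (induction a)
        case 0
        then show ?case
          using f by (simp add: sigma_compatible_def nat_vectors_def)
      next
        case (Suc a)
        have "f a + \<delta> a \<le> f (Suc a)"
          using f Suc.prems \<delta>0 by (cases "a = 0") (auto simp: sigma_compatible_def nat_vectors_def \<delta>_def)
        then show ?case
          using Suc by (simp add: \<psi>_def)
      qed
      then show "\<phi> (\<psi> f) = f"
        using f by (auto simp: \<phi>_def sigma_compatible_def nat_vectors_def fun_eq_iff)
    qed
  qed
  then show ?thesis
    unfolding \<phi>_def[abs_def] \<delta>_def .
qed

lemma has_sum_sigma_compatible_id:
  fixes c :: real
  assumes "0 \<le> c" "c < 1" "D \<subseteq> {1..n-1}"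
  shows "((\<lambda>f. c ^ sum f {1..n}) has_sum c ^ cD n D / qpoch c c n) (sigma_compatible n id D)"
proof -
  let ?\<phi> = "\<lambda>e a. if a \<in> {1..n} then \<Sum>k<a. e k + (if k \<in> D then 1 else 0) else 0"
  let ?E = "{e. \<forall>k. k \<notin> {..<n} \<longrightarrow> e k = 0}"
  have weight: "sum (?\<phi> e) {1..n} = (\<Sum>k<n. (n - k) * e k) + cD n D" for e
  proof -
    have "sum (?\<phi> e) {1..n} = (\<Sum>a\<in>{1..n}. \<Sum>k<a. e k + (if k \<in> D then 1 else 0))"
      by (rule sum.cong) auto
    also have "\<dots> = (\<Sum>k<n. (n - k) * (e k + (if k \<in> D then 1 else 0)))"
      by (rule sum_atLeastAtMost_partial_sums)
    also have "\<dots> = (\<Sum>k<n. (n - k) * e k) + (\<Sum>k<n. if k \<in> D then n - k else 0)"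
      unfolding sum.distrib[symmetric] by (rule sum.cong) (auto simp: add_mult_distrib2)
    also have "(\<Sum>k<n. if k \<in> D then n - k else 0) = cD n D"
    proof -
      have "{k \<in> {..<n}. k \<in> D} = D"
        using assms(3) by (auto simp: subset_eq)
      then show ?thesis
        by (simp add: sum.inter_filter[symmetric] cD_def)
    qed
    finally show ?thesis .
  qed
  have "((\<lambda>e. c ^ cD n D * (\<Prod>k<n. (c ^ (n - k)) ^ e k)) has_sum
      c ^ cD n D * (\<Prod>k<n. 1 / (1 - c ^ (n - k)))) ?E"
    using assms(1,2) by (intro has_sum_cmult_right has_sum_geometric_Pi) (auto simp: power_less_one_iff)
  moreover have "c ^ sum (?\<phi> e) {1..n} = c ^ cD n D * (\<Prod>k<n. (c ^ (n - k)) ^ e k)" for e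
    unfolding weight power_add power_sum power_mult by (rule mult.commute)
  moreover have "c ^ cD n D * (\<Prod>k<n. 1 / (1 - c ^ (n - k))) = c ^ cD n D / qpoch c c n"
    by (simp add: qpoch_eq_prod_reversed prod_dividef)
  ultimately have "((\<lambda>e. c ^ sum (?\<phi> e) {1..n}) has_sum c ^ cD n D / qpoch c c n) ?E"
    by simp
  then show ?thesis
    using has_sum_reindex_bij_betw[OF bij_betw_partial_sums_sigma_compatible_id[OF assms(3)]] by blast
qed

lemma has_sum_sigma_compatible:
  fixes c :: real
  assumes "0 \<le> c" "c < 1" "\<sigma> permutes {1..n}" "D \<subseteq> {1..n-1}"
  shows "((\<lambda>f. c ^ sum f {1..n}) has_sum c ^ cD n D / qpoch c c n) (sigma_compatible n \<sigma> D)"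
proof -
  have sum_permute: "sum (f \<circ> \<sigma>) {1..n} = sum f {1..n}" for f
    using sum.permute[OF assms(3)] by (rule sym)
  have fixes_outside: "\<sigma> j = j" "inv \<sigma> j = j" if "j \<notin> {1..n}" for j
    using that assms(3) permutes_inv[OF assms(3)] by (simp_all add: permutes_not_in)
  have "bij_betw (\<lambda>f. f \<circ> \<sigma>) (sigma_compatible n \<sigma> D) (sigma_compatible n id D)"
    by (rule bij_betw_byWitness[where f' = "\<lambda>g. g \<circ> inv \<sigma>"])
      (auto simp: sigma_compatible_def nat_vectors_def fixes_outside fun_eq_iff
        permutes_inverses[OF assms(3)])
  then have "((\<lambda>f. c ^ sum (f \<circ> \<sigma>) {1..n}) has_sum c ^ cD n D / qpoch c c n) (sigma_compatible n \<sigma> D)"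
    using has_sum_reindex_bij_betw[of _ _ _ "\<lambda>f. c ^ sum f {1..n}"]
      has_sum_sigma_compatible_id[OF assms(1,2,4)]
    by blast
  then show ?thesis
    unfolding sum_permute .
qed

lemma has_sum_qmon_sigmaR_DesRS:
  assumes \<sigma>: "\<sigma> permutes {1..n}" and D: "D \<subseteq> {1..n-1}"
    and q: "\<And>i. i \<in> {1..Suc m} \<Longrightarrow> 0 \<le> q i \<and> q i < 1"
  shows "(qmon n (Suc m) q has_sum
      q (Suc m) ^ cD n D / qpoch (q (Suc m)) (q (Suc m)) n *
        (\<Sum>\<^sub>\<infinity>S\<in>{S \<in> tuples n m. DesRS n R S \<sigma> = D}. qmon n m q S))
    {Z \<in> tuples n (Suc m). sigmaR n R Z = \<sigma> \<and> DesRS n R (drop_first Z) \<sigma> = D}"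
proof -
  let ?B = "{S \<in> tuples n m. DesRS n R S \<sigma> = D}" and ?c = "q (Suc m)"
  have "bij_betw (\<lambda>(f, S). cons_tuple n f S)
      {p \<in> nat_vectors n \<times> tuples n m. fst p \<in> sigma_compatible n \<sigma> D \<and> DesRS n R (snd p) \<sigma> = D}
      {Z \<in> tuples n (Suc m). sigmaR n R Z = \<sigma> \<and> DesRS n R (drop_first Z) \<sigma> = D}"
    by (rule bij_betw_Collect[OF bij_betw_cons_tuple])
      (clarsimp simp: sigmaR_cons_tuple_eq_iff[OF _ \<sigma>] drop_first_cons_tuple; blast)
  moreover have "{p \<in> nat_vectors n \<times> tuples n m.
      fst p \<in> sigma_compatible n \<sigma> D \<and> DesRS n R (snd p) \<sigma> = D} = sigma_compatible n \<sigma> D \<times> ?B"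
    by (auto simp: sigma_compatible_def)
  ultimately have bij: "bij_betw (\<lambda>(f, S). cons_tuple n f S) (sigma_compatible n \<sigma> D \<times> ?B)
      {Z \<in> tuples n (Suc m). sigmaR n R Z = \<sigma> \<and> DesRS n R (drop_first Z) \<sigma> = D}"
    by simp
  have "(qmon n m q has_sum infsum (qmon n m q) ?B) ?B"
    using q by (intro has_sum_infsum summable_on_subset[OF qmon_summable]) auto
  then have "((\<lambda>(f, S). ?c ^ sum f {1..n} * qmon n m q S) has_sum
      ?c ^ cD n D / qpoch ?c ?c n * infsum (qmon n m q) ?B) (sigma_compatible n \<sigma> D \<times> ?B)"
    using \<sigma> D q by (intro has_sum_mult_nonneg has_sum_sigma_compatible qmon_nonneg) auto
  then show ?thesis
    using has_sum_reindex_bij_betw[OF bij, of "qmon n (Suc m) q"]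
    by (simp add: qmon_cons_tuple case_prod_unfold)
qed

lemma qpoch_pos:
  fixes c :: real
  assumes "0 \<le> c" "c < 1"
  shows "0 < qpoch c c n"
  unfolding qpoch_def using assms
  by (intro prod_pos) (simp add: power_less_one_iff flip: power_Suc)

theorem proposition4:
  fixes n r :: nat and R D :: "nat set" and \<sigma> :: "nat \<Rightarrow> nat" and q :: "nat \<Rightarrow> real"
  assumes "n \<ge> 1" and "r \<ge> 1"
    and "R \<subseteq> {1..n-1}" and "D \<subseteq> {1..n-1}"
    and "\<sigma> permutes {1..n}"
    and "\<forall>i\<in>{1..r}. 0 \<le> q i \<and> q i < 1"
  shows "(\<lambda>Z. qmon n r q Z * (if DesRS n R (drop_first Z) \<sigma> = D then 1 else 0))
            summable_on {Z \<in> tuples n r. sigmaR n R Z = \<sigma>}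
       \<and> (\<lambda>S. qmon n (r - 1) q S) summable_on {S \<in> tuples n (r - 1). DesRS n R S \<sigma> = D}
       \<and> qpoch (q r) (q r) n *
           (\<Sum>\<^sub>\<infinity>Z\<in>{Z \<in> tuples n r. sigmaR n R Z = \<sigma>}.
              qmon n r q Z * (if DesRS n R (drop_first Z) \<sigma> = D then 1 else 0))
         = q r ^ cD n D * (\<Sum>\<^sub>\<infinity>S\<in>{S \<in> tuples n (r - 1). DesRS n R S \<sigma> = D}. qmon n (r - 1) q S)"
proof -
  obtain m where r: "r = Suc m"
    using assms(2) by (cases r) auto
  let ?B = "{S \<in> tuples n m. DesRS n R S \<sigma> = D}"
  let ?value = "q r ^ cD n D / qpoch (q r) (q r) n * infsum (qmon n m q) ?B"
  have "((\<lambda>Z. qmon n r q Z * (if DesRS n R (drop_first Z) \<sigma> = D then 1 else 0)) has_sum ?value)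
      {Z \<in> tuples n r. sigmaR n R Z = \<sigma>}"
    using has_sum_qmon_sigmaR_DesRS[OF assms(5,4), of m q R] assms(6)
    unfolding r by (subst has_sum_cong_neutral) auto
  moreover have "qmon n m q summable_on ?B"
    using assms(6) unfolding r by (intro summable_on_subset[OF qmon_summable]) auto
  moreover have "0 < qpoch (q r) (q r) n"
    using assms(2,6) by (intro qpoch_pos) auto
  ultimately show ?thesis
    unfolding r by (auto simp: summable_on_def infsumI)
qed

end
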